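(* Let $q_1$ be piecewise continuous on $I=[a,b]$ and let $u$ be a solution of $u''+q_1(t)u=0$ with $u(a)=u(b)=0$, $a,b$ consecutive zeros of $u$. Then for every $\eta\in(0,b-a)$ there exist a piecewise continuous function $q_2$ on $I$ and a subinterval $J\subset I$ of length at most $\eta$ such that the inequality $q_1(t)\le q_2(t)$ is satisfied only for $t\in J$, and Sturm's comparison theorem holds on $I$, i.e. every solution $v$ of $v''+q_2(t)v=0$ has at least one zero in $I$.
   Context: "Solution" always means a nontrivial (not identically zero) solution. *)

theory Defs
  imports "HOL-Analysis.Analysis"
begin

definition piecewise_cont :: "real \<Rightarrow> real \<Rightarrow> (real \<Rightarrow> real) \<Rightarrow> bool" where
  "piecewise_cont a b q \<longleftrightarrow>
     (\<exists>S. finite S \<and>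
        (\<forall>t\<in>{a..b} - S. continuous (at t within {a..b}) q) \<and>
        (\<forall>s\<in>S \<inter> {a<..b}. \<exists>l. (q \<longlongrightarrow> l) (at_left s)) \<and>
        (\<forall>s\<in>S \<inter> {a..<b}. \<exists>l. (q \<longlongrightarrow> l) (at_right s)))"

definition ode_solution :: "real \<Rightarrow> real \<Rightarrow> (real \<Rightarrow> real) \<Rightarrow> (real \<Rightarrow> real) \<Rightarrow> bool" where
  "ode_solution a b q u \<longleftrightarrow>
     (\<exists>u' S. finite S \<and> continuous_on {a..b} u' \<and>
        (\<forall>t\<in>{a..b}. (u has_real_derivative u' t) (at t within {a..b})) \<and>
        (\<forall>t\<in>{a..b} - S. (u' has_real_derivative (- q t * u t)) (at t within {a..b})))"

text \<open>"Solution" always means a nontrivial one.\<close>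
definition nontrivial_solution :: "real \<Rightarrow> real \<Rightarrow> (real \<Rightarrow> real) \<Rightarrow> (real \<Rightarrow> real) \<Rightarrow> bool" where
  "nontrivial_solution a b q u \<longleftrightarrow> ode_solution a b q u \<and> (\<exists>t\<in>{a..b}. u t \<noteq> 0)"

end

theory Submission imports Defs begin

(* On a subinterval J of length eta put q2 = (pi/eta)^2, and put q2 = q1 - 1 elsewhere,
   so that q1 <= q2 can only hold on J. Any solution v of v'' + k^2 v = 0 on an interval
   [c, c + pi/k] satisfies v(c + pi/k) = -v(c), since its Wronskian with sin(k(t - c)) is
   constant; by the intermediate value theorem v vanishes in that interval. *)

lemma piecewise_contI:
  assumes "finite S"
    and "\<And>t. t \<in> {a..b} - S \<Longrightarrow> continuous (at t within {a..b}) q"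
    and "\<And>s. s \<in> {a<..b} \<Longrightarrow> \<exists>l. (q \<longlongrightarrow> l) (at_left s)"
    and "\<And>s. s \<in> {a..<b} \<Longrightarrow> \<exists>l. (q \<longlongrightarrow> l) (at_right s)"
  shows "piecewise_cont a b q"
  using assms unfolding piecewise_cont_def by blast

lemma piecewise_cont_left_limit:
  assumes "piecewise_cont a b q" "s \<in> {a<..b}"
  shows "\<exists>l. (q \<longlongrightarrow> l) (at_left s)"
proof -
  obtain S where S: "\<forall>t\<in>{a..b} - S. continuous (at t within {a..b}) q"
     "\<forall>s\<in>S \<inter> {a<..b}. \<exists>l. (q \<longlongrightarrow> l) (at_left s)"
    using assms(1) unfolding piecewise_cont_def by blast
  show ?thesis
  proof (cases "s \<in> S")
    case True
    then show ?thesis using S assms(2) by blast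
  next
    case False
    then have "(q \<longlongrightarrow> q s) (at s within {a..b})"
      using S assms(2) by (auto simp: continuous_within)
    then have "(q \<longlongrightarrow> q s) (at s within {a..s})"
      by (rule tendsto_within_subset) (use assms(2) in auto)
    then show ?thesis using at_within_Icc_at_left[of a s] assms(2) by auto
  qed
qed

lemma piecewise_cont_right_limit:
  assumes "piecewise_cont a b q" "s \<in> {a..<b}"
  shows "\<exists>l. (q \<longlongrightarrow> l) (at_right s)"
proof -
  obtain S where S: "\<forall>t\<in>{a..b} - S. continuous (at t within {a..b}) q"
     "\<forall>s\<in>S \<inter> {a..<b}. \<exists>l. (q \<longlongrightarrow> l) (at_right s)"
    using assms(1) unfolding piecewise_cont_def by blast
  show ?thesis
  proof (cases "s \<in> S")
    case True
    then show ?thesis using S assms(2) by blast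
  next
    case False
    then have "(q \<longlongrightarrow> q s) (at s within {a..b})"
      using S assms(2) by (auto simp: continuous_within)
    then have "(q \<longlongrightarrow> q s) (at s within {s..b})"
      by (rule tendsto_within_subset) (use assms(2) in auto)
    then show ?thesis using at_within_Icc_at_right[of s b] assms(2) by auto
  qed
qed

lemma piecewise_cont_const: "piecewise_cont a b (\<lambda>_. K)"
  by (rule piecewise_contI[of "{}"]) auto

lemma piecewise_cont_diff:
  assumes f: "piecewise_cont a b f" and g: "piecewise_cont a b g"
  shows "piecewise_cont a b (\<lambda>t. f t - g t)"
proof -
  obtain Sf Sg where "finite Sf" "finite Sg"
    and "\<forall>t\<in>{a..b} - Sf. continuous (at t within {a..b}) f"
    and "\<forall>t\<in>{a..b} - Sg. continuous (at t within {a..b}) g"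
    using f g unfolding piecewise_cont_def by blast
  then show ?thesis
  proof (intro piecewise_contI[of "Sf \<union> Sg"])
    show "\<exists>l. ((\<lambda>t. f t - g t) \<longlongrightarrow> l) (at_left s)" if "s \<in> {a<..b}" for s
      using piecewise_cont_left_limit[OF f that] piecewise_cont_left_limit[OF g that]
      by (blast intro: tendsto_diff)
    show "\<exists>l. ((\<lambda>t. f t - g t) \<longlongrightarrow> l) (at_right s)" if "s \<in> {a..<b}" for s
      using piecewise_cont_right_limit[OF f that] piecewise_cont_right_limit[OF g that]
      by (blast intro: tendsto_diff)
  qed (auto intro: continuous_diff)
qed

lemma piecewise_cont_if_le:
  fixes d :: real
  assumes f: "piecewise_cont a b f" and g: "piecewise_cont a b g"
  shows "piecewise_cont a b (\<lambda>t. if t \<le> d then f t else g t)" (is "piecewise_cont a b ?h")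
proof -
  obtain Sf Sg where S: "finite Sf" "finite Sg"
    and fc: "\<forall>t\<in>{a..b} - Sf. continuous (at t within {a..b}) f"
    and gc: "\<forall>t\<in>{a..b} - Sg. continuous (at t within {a..b}) g"
    using f g unfolding piecewise_cont_def by blast
  have "continuous (at t within {a..b}) ?h" if t: "t \<in> {a..b} - insert d (Sf \<union> Sg)" for t
  proof (cases "t < d")
    case True
    have "(f \<longlongrightarrow> f t) (at t within {a..b})" using fc t by (auto simp: continuous_within)
    then have "(?h \<longlongrightarrow> f t) (at t within {a..b})"
      by (rule Lim_transform_within[where d="d - t"]) (use True in \<open>auto simp: dist_real_def\<close>)
    then show ?thesis using True by (simp add: continuous_within)
  next
    case False
    then have "d < t" using t by auto
    have "(g \<longlongrightarrow> g t) (at t within {a..b})" using gc t by (auto simp: continuous_within)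
    then have "(?h \<longlongrightarrow> g t) (at t within {a..b})"
      by (rule Lim_transform_within[where d="t - d"]) (use \<open>d < t\<close> in \<open>auto simp: dist_real_def\<close>)
    then show ?thesis using \<open>d < t\<close> by (simp add: continuous_within)
  qed
  moreover have "\<exists>l. (?h \<longlongrightarrow> l) (at_left s)" if s: "s \<in> {a<..b}" for s
  proof (cases "s \<le> d")
    case True
    obtain l where l: "(f \<longlongrightarrow> l) (at_left s)" using piecewise_cont_left_limit[OF f s] by blast
    have "eventually (\<lambda>x. x < s) (at_left s)" by (simp add: eventually_at_filter)
    then have "eventually (\<lambda>x. f x = ?h x) (at_left s)"
      by (rule eventually_mono) (use True in simp)
    then show ?thesis using l by (blast intro: Lim_transform_eventually)
  next
    case False
    obtain l where l: "(g \<longlongrightarrow> l) (at_left s)" using piecewise_cont_left_limit[OF g s] by blast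
    have "eventually (\<lambda>x. g x = ?h x) (at_left s)"
      using False by (auto simp: eventually_at_left[of d s] intro!: exI[of _ d])
    then show ?thesis using l by (blast intro: Lim_transform_eventually)
  qed
  moreover have "\<exists>l. (?h \<longlongrightarrow> l) (at_right s)" if s: "s \<in> {a..<b}" for s
  proof (cases "s < d")
    case True
    obtain l where l: "(f \<longlongrightarrow> l) (at_right s)" using piecewise_cont_right_limit[OF f s] by blast
    have "eventually (\<lambda>x. f x = ?h x) (at_right s)"
      using True by (auto simp: eventually_at_right[of s d] intro!: exI[of _ d])
    then show ?thesis using l by (blast intro: Lim_transform_eventually)
  next
    case False
    obtain l where l: "(g \<longlongrightarrow> l) (at_right s)" using piecewise_cont_right_limit[OF g s] by blast
    have "eventually (\<lambda>x. s < x) (at_right s)" by (simp add: eventually_at_filter)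
    then have "eventually (\<lambda>x. g x = ?h x) (at_right s)"
      by (rule eventually_mono) (use False in simp)
    then show ?thesis using l by (blast intro: Lim_transform_eventually)
  qed
  ultimately show ?thesis using S by (intro piecewise_contI[of "insert d (Sf \<union> Sg)"]) auto
qed

lemma ode_solution_continuous_on:
  assumes "ode_solution a b q v"
  shows "continuous_on {a..b} v"
  using assms unfolding ode_solution_def
  by (meson DERIV_continuous continuous_on_eq_continuous_within)

lemma ode_solution_const_coeff_half_period:
  fixes k c :: real
  assumes sol: "ode_solution a b q v" and "0 < k" "a \<le> c" "c + pi/k \<le> b"
    and q: "\<And>t. t \<in> {c..c + pi/k} \<Longrightarrow> q t = k\<^sup>2"
  shows "v (c + pi/k) = - v c"
proof -
  define d where "d = c + pi/k"
  have "c < d" "k * (d - c) = pi" "{c..d} \<subseteq> {a..b}"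
    using assms by (auto simp: d_def)
  obtain v' S where "finite S" and v'c: "continuous_on {a..b} v'"
    and dv: "\<And>t. t \<in> {a..b} \<Longrightarrow> (v has_real_derivative v' t) (at t within {a..b})"
    and dv': "\<And>t. t \<in> {a..b} - S \<Longrightarrow> (v' has_real_derivative (- q t * v t)) (at t within {a..b})"
    using sol unfolding ode_solution_def by blast
  define W where "W t = v' t * sin (k * (t - c)) - v t * (k * cos (k * (t - c)))" for t
  have "continuous_on {c..d} W"
    using v'c ode_solution_continuous_on[OF sol] \<open>{c..d} \<subseteq> {a..b}\<close> unfolding W_def
    by (intro continuous_intros) (auto elim: continuous_on_subset)
  moreover have "(W has_vector_derivative 0) (at t)" if t: "t \<in> {c<..<d} - S" for t
  proof -
    have "t \<in> {a..b}" and int: "t \<in> interior {a..b}" and "q t = k\<^sup>2"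
      using t q \<open>{c..d} \<subseteq> {a..b}\<close> by (auto simp: d_def)
    then have "(v has_real_derivative v' t) (at t)"
      and "(v' has_real_derivative - (k\<^sup>2 * v t)) (at t)"
      using dv[of t] dv'[of t] t by (simp_all add: at_within_interior[OF int])
    then have "(W has_real_derivative
        - (k\<^sup>2 * v t) * sin (k * (t - c)) + v' t * (cos (k * (t - c)) * k)
        - (v' t * (k * cos (k * (t - c))) + v t * (k * (- sin (k * (t - c)) * k)))) (at t)"
      unfolding W_def by (auto intro!: derivative_eq_intros)
    then show ?thesis
      by (simp add: has_real_derivative_iff_has_vector_derivative algebra_simps power2_eq_square)
  qed
  ultimately have "((\<lambda>_. 0::real) has_integral (W d - W c)) {c..d}"
    using \<open>finite S\<close> \<open>c < d\<close> by (intro fundamental_theorem_of_calculus_interior_strong) auto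
  then have "W d = W c" using has_integral_0 has_integral_unique by force
  moreover have "W c = - v c * k" "W d = v d * k"
    using \<open>k * (d - c) = pi\<close> by (simp_all add: W_def mult.commute)
  ultimately have "v d * k = (- v c) * k" by simp
  then have "v d = - v c" using \<open>0 < k\<close> by (metis mult_right_cancel order_less_irrefl)
  then show ?thesis by (simp add: d_def)
qed

lemma continuous_on_opposite_values_has_zero:
  fixes f :: "real \<Rightarrow> real"
  assumes "c \<le> d" "continuous_on {c..d} f" "f d = - f c"
  shows "\<exists>t\<in>{c..d}. f t = 0"
proof (cases "f c \<le> 0")
  case True
  then show ?thesis using IVT'[of f c 0 d] assms by fastforce
next
  case False
  then show ?thesis using IVT2'[of f d 0 c] assms by fastforce
qed

lemma ode_solution_const_coeff_has_zero:
  fixes k c :: real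
  assumes sol: "ode_solution a b q v" and "0 < k" "a \<le> c" "c + pi/k \<le> b"
    and "\<And>t. t \<in> {c..c + pi/k} \<Longrightarrow> q t = k\<^sup>2"
  shows "\<exists>t\<in>{c..c + pi/k}. v t = 0"
proof (rule continuous_on_opposite_values_has_zero)
  show "c \<le> c + pi/k" using \<open>0 < k\<close> by simp
  show "continuous_on {c..c + pi/k} v"
    using ode_solution_continuous_on[OF sol] by (rule continuous_on_subset) (use assms(3,4) in auto)
  show "v (c + pi/k) = - v c" using ode_solution_const_coeff_half_period assms by blast
qed

theorem theorem5:
  fixes a b :: real and q1 u :: "real \<Rightarrow> real"
  assumes "a < b"
    and "piecewise_cont a b q1"
    and "nontrivial_solution a b q1 u"
    and "u a = 0" and "u b = 0"
    and "\<forall>t\<in>{a<..<b}. u t \<noteq> 0"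
  shows "\<forall>\<eta>. 0 < \<eta> \<and> \<eta> < b - a \<longrightarrow>
           (\<exists>q2 c d. piecewise_cont a b q2 \<and> a \<le> c \<and> c \<le> d \<and> d \<le> b \<and> d - c \<le> \<eta> \<and>
              {t\<in>{a..b}. q1 t \<le> q2 t} \<subseteq> {c..d} \<and>
              (\<forall>v. nontrivial_solution a b q2 v \<longrightarrow> (\<exists>t\<in>{a..b}. v t = 0)))"
proof (intro allI impI)
  fix \<eta> :: real
  assume \<eta>: "0 < \<eta> \<and> \<eta> < b - a"
  define k where "k = pi / \<eta>"
  define q2 where "q2 t = (if t \<le> a + \<eta> then k\<^sup>2 else q1 t - 1)" for t
  have "a + pi/k = a + \<eta>" using \<eta> by (simp add: k_def)
  have "piecewise_cont a b q2"
    unfolding q2_def by (intro piecewise_cont_if_le piecewise_cont_diff piecewise_cont_const assms(2))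
  moreover have "{t\<in>{a..b}. q1 t \<le> q2 t} \<subseteq> {a..a + \<eta>}"
    by (auto simp: q2_def split: if_splits)
  moreover have "\<forall>v. nontrivial_solution a b q2 v \<longrightarrow> (\<exists>t\<in>{a..b}. v t = 0)"
  proof (intro allI impI)
    fix v
    assume "nontrivial_solution a b q2 v"
    then have "\<exists>t\<in>{a..a + pi/k}. v t = 0"
      by (intro ode_solution_const_coeff_has_zero[where q = q2])
        (use \<eta> in \<open>auto simp: nontrivial_solution_def k_def q2_def\<close>)
    then show "\<exists>t\<in>{a..b}. v t = 0" using \<eta> \<open>a + pi/k = a + \<eta>\<close> by auto
  qed
  ultimately show "\<exists>q2 c d. piecewise_cont a b q2 \<and> a \<le> c \<and> c \<le> d \<and> d \<le> b \<and> d - c \<le> \<eta> \<and>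
              {t\<in>{a..b}. q1 t \<le> q2 t} \<subseteq> {c..d} \<and>
              (\<forall>v. nontrivial_solution a b q2 v \<longrightarrow> (\<exists>t\<in>{a..b}. v t = 0))"
    using \<eta> by (intro exI[of _ q2] exI[of _ a] exI[of _ "a + \<eta>"]) simp
qed

end
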